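(* Let $t\ge 2$, let $n_1,\dots,n_t$ be positive integers, and let $G=K_{n_1,\dots,n_t}$ be the complete $t$-partite graph with partite sets $V_1,\dots,V_t$, $|V_i|=n_i$. Let $N_t=\{1,\dots,t\}$ and $f(I)=\sum_{i\in I}n_i$ for $I\subseteq N_t$. Let $p$ be a positive integer with $f(N_t)>p$. Then $$\gamma_p(G)\le \min\{f(I): I\subseteq N_t,\ f(I)\ge p\},$$ with equality if $G$ has a $\gamma_p(G)$-set $D$ with $f(I_D)\ge p$.
   Context: A set $S\subseteq V(G)$ is a $p$-dominating set of $G$ if every vertex $v\in V(G)\setminus S$ has at least $p$ neighbors in $S$. The $p$-domination number $\gamma_p(G)$ is the minimum cardinality of a $p$-dominating set of $G$, and a $\gamma_p(G)$-set is a $p$-dominating set of cardinality $\gamma_p(G)$. For $D\subseteq V(G)$ write $D_i=V_i\cap D$ for $i\in N_t$ and $I_D=\{i\in N_t: |D_i|=|V_i|\}$. *)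

theory Defs
  imports Main
begin

definition p_dominating :: "'a set \<Rightarrow> ('a \<Rightarrow> 'a \<Rightarrow> bool) \<Rightarrow> nat \<Rightarrow> 'a set \<Rightarrow> bool" where
  "p_dominating V E p S \<longleftrightarrow> S \<subseteq> V \<and> (\<forall>v \<in> V - S. card {u \<in> S. E v u} \<ge> p)"

definition gamma_p :: "'a set \<Rightarrow> ('a \<Rightarrow> 'a \<Rightarrow> bool) \<Rightarrow> nat \<Rightarrow> nat" where
  "gamma_p V E p = Min (card ` {S. p_dominating V E p S})"

definition gamma_p_set :: "'a set \<Rightarrow> ('a \<Rightarrow> 'a \<Rightarrow> bool) \<Rightarrow> nat \<Rightarrow> 'a set \<Rightarrow> bool" where
  "gamma_p_set V E p D \<longleftrightarrow> p_dominating V E p D \<and> card D = gamma_p V E p"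

text \<open>Complete t-partite graph K_{n_1,...,n_t}: vertex (i,j) lies in part V_i,
  i \<in> {1..t}, j < n i; two vertices are adjacent iff they lie in different parts.\<close>

definition cmp_V :: "nat \<Rightarrow> (nat \<Rightarrow> nat) \<Rightarrow> (nat \<times> nat) set" where
  "cmp_V t n = {(i, j). i \<in> {1..t} \<and> j < n i}"

definition cmp_E :: "nat \<times> nat \<Rightarrow> nat \<times> nat \<Rightarrow> bool" where
  "cmp_E u v \<longleftrightarrow> fst u \<noteq> fst v"

definition cmp_part :: "nat \<Rightarrow> (nat \<Rightarrow> nat) \<Rightarrow> nat \<Rightarrow> (nat \<times> nat) set" where
  "cmp_part t n i = {v \<in> cmp_V t n. fst v = i}"

definition full_parts :: "nat \<Rightarrow> (nat \<Rightarrow> nat) \<Rightarrow> (nat \<times> nat) set \<Rightarrow> nat set" where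
  "full_parts t n D = {i \<in> {1..t}. card (D \<inter> cmp_part t n i) = card (cmp_part t n i)}"

end

theory Submission
  imports Defs
begin

text \<open>Any union of whole parts \<open>V\<^sub>i\<close>, \<open>i \<in> I\<close>, is a \<open>p\<close>-dominating set as soon as
  \<open>f(I) \<ge> p\<close>, since each outside vertex is adjacent to all of it; this gives the upper bound.
  Conversely a \<open>\<gamma>\<^sub>p\<close>-set \<open>D\<close> contains the union of its full parts, so \<open>\<gamma>\<^sub>p = |D| \<ge> f(I\<^sub>D)\<close>, and
  \<open>f(I\<^sub>D) \<ge> p\<close> makes \<open>I\<^sub>D\<close> a competitor in the minimum.\<close>

lemma cmp_V_eq_Sigma: "cmp_V t n = Sigma {1..t} (\<lambda>i. {..<n i})"
  unfolding cmp_V_def by auto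

lemma cmp_part_eq: "i \<in> {1..t} \<Longrightarrow> cmp_part t n i = {i} \<times> {..<n i}"
  unfolding cmp_part_def cmp_V_def by auto

lemma finite_cmp_V: "finite (cmp_V t n)"
  unfolding cmp_V_eq_Sigma by auto

lemma gamma_p_le_card:
  assumes "finite V" and "p_dominating V E p S"
  shows "gamma_p V E p \<le> card S"
proof -
  have "finite {S. p_dominating V E p S}"
    by (rule finite_subset[of _ "Pow V"]) (auto simp: p_dominating_def assms(1))
  then show ?thesis
    unfolding gamma_p_def using assms(2) by (intro Min_le) auto
qed

lemma card_Sigma_parts: "finite I \<Longrightarrow> card (Sigma I (\<lambda>i. {..<n i})) = sum n I"
  by (simp add: card_SigmaI)

lemma p_dominating_union_of_parts:
  assumes "I \<subseteq> {1..t}" and "sum n I \<ge> p"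
  shows "p_dominating (cmp_V t n) cmp_E p (Sigma I (\<lambda>i. {..<n i}))"
  unfolding p_dominating_def
proof (intro conjI ballI)
  let ?S = "Sigma I (\<lambda>i. {..<n i})"
  show "?S \<subseteq> cmp_V t n"
    using assms(1) unfolding cmp_V_eq_Sigma by auto
  fix v assume "v \<in> cmp_V t n - ?S"
  then have "fst v \<notin> I"
    unfolding cmp_V_eq_Sigma by auto
  then have "{u \<in> ?S. cmp_E v u} = ?S"
    unfolding cmp_E_def by auto
  then show "card {u \<in> ?S. cmp_E v u} \<ge> p"
    using assms card_Sigma_parts[of I n] finite_subset[of I "{1..t}"] by simp
qed

lemma full_parts_subset: "full_parts t n D \<subseteq> {1..t}"
  unfolding full_parts_def by auto

lemma union_of_full_parts_subset:
  "Sigma (full_parts t n D) (\<lambda>i. {..<n i}) \<subseteq> D"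
proof
  fix x assume "x \<in> Sigma (full_parts t n D) (\<lambda>i. {..<n i})"
  then obtain i j where x: "x = (i, j)" "i \<in> full_parts t n D" "j < n i"
    by auto
  then have i: "i \<in> {1..t}"
    using full_parts_subset by blast
  have "card (D \<inter> cmp_part t n i) = card (cmp_part t n i)"
    using x(2) unfolding full_parts_def by auto
  then have "D \<inter> cmp_part t n i = cmp_part t n i"
    by (intro card_subset_eq) (auto simp: cmp_part_eq[OF i])
  moreover have "x \<in> cmp_part t n i"
    using x cmp_part_eq[OF i] by auto
  ultimately show "x \<in> D"
    by auto
qed

lemma finite_part_sums:
  fixes n :: "nat \<Rightarrow> nat"
  shows "finite {sum n I | I. I \<subseteq> {1..t} \<and> sum n I \<ge> p}"
  by (rule finite_subset[of _ "sum n ` Pow {1..t}"]) auto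

lemma gamma_p_le_Min_part_sums:
  assumes "sum n {1..t} \<ge> p"
  shows "gamma_p (cmp_V t n) cmp_E p \<le> Min {sum n I | I. I \<subseteq> {1..t} \<and> sum n I \<ge> p}"
proof -
  let ?M = "{sum n I | I. I \<subseteq> {1..t} \<and> sum n I \<ge> p}"
  have "Min ?M \<in> ?M"
    using finite_part_sums assms by (intro Min_in) auto
  then obtain I where I: "I \<subseteq> {1..t}" "sum n I \<ge> p" "Min ?M = sum n I"
    by auto
  have "gamma_p (cmp_V t n) cmp_E p \<le> card (Sigma I (\<lambda>i. {..<n i}))"
    using finite_cmp_V p_dominating_union_of_parts[OF I(1,2)] by (rule gamma_p_le_card)
  also have "\<dots> = Min ?M"
    using I(1,3) card_Sigma_parts finite_subset[of I "{1..t}"] by simp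
  finally show ?thesis .
qed

lemma Min_part_sums_le_gamma_p:
  assumes "gamma_p_set (cmp_V t n) cmp_E p D" and "sum n (full_parts t n D) \<ge> p"
  shows "Min {sum n I | I. I \<subseteq> {1..t} \<and> sum n I \<ge> p} \<le> gamma_p (cmp_V t n) cmp_E p"
proof -
  let ?F = "full_parts t n D"
  have "finite D"
    using assms(1) finite_cmp_V finite_subset
    unfolding gamma_p_set_def p_dominating_def by blast
  have "Min {sum n I | I. I \<subseteq> {1..t} \<and> sum n I \<ge> p} \<le> sum n ?F"
    using finite_part_sums full_parts_subset[of t n D] assms(2) by (intro Min_le) blast+
  also have "\<dots> = card (Sigma ?F (\<lambda>i. {..<n i}))"
    using full_parts_subset card_Sigma_parts finite_subset[of ?F "{1..t}"] by simp
  also have "\<dots> \<le> card D"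
    using \<open>finite D\<close> union_of_full_parts_subset by (rule card_mono)
  also have "\<dots> = gamma_p (cmp_V t n) cmp_E p"
    using assms(1) unfolding gamma_p_set_def by simp
  finally show ?thesis .
qed

theorem lemma2:
  fixes t p :: nat and n :: "nat \<Rightarrow> nat"
  assumes "t \<ge> 2"
    and "\<forall>i \<in> {1..t}. n i > 0"
    and "p > 0"
    and "(\<Sum>i\<in>{1..t}. n i) > p"
  shows "gamma_p (cmp_V t n) cmp_E p \<le> Min {sum n I | I. I \<subseteq> {1..t} \<and> sum n I \<ge> p}
    \<and> ((\<exists>D. gamma_p_set (cmp_V t n) cmp_E p D \<and> sum n (full_parts t n D) \<ge> p) \<longrightarrow>
         gamma_p (cmp_V t n) cmp_E p = Min {sum n I | I. I \<subseteq> {1..t} \<and> sum n I \<ge> p})"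
proof -
  have "gamma_p (cmp_V t n) cmp_E p \<le> Min {sum n I | I. I \<subseteq> {1..t} \<and> sum n I \<ge> p}"
    using assms(4) by (intro gamma_p_le_Min_part_sums) simp
  then show ?thesis
    using Min_part_sums_le_gamma_p by (auto intro: antisym)
qed

end
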